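(* Let $\mathbb{K}$ be an algebraically closed field of characteristic zero, $Y$ an irreducible affine variety and $X=Y\times\mathbb{A}^1$. Let $V\subseteq Y$ be a nonempty closed rigid subset such that $V\times\mathbb{A}^1\subseteq X$ is $\mathrm{SAut}(X)$-invariant. Then $Y$ is of type B or C, i.e. $\mathrm{HD}^*(X)\neq\mathbb{K}[X]$.
   Context: A derivation is locally nilpotent (LND) if every element is killed by some power of it; a closed subset $V$ is rigid if its coordinate ring $\mathbb{K}[V]$ admits no nonzero LND. Each LND $\partial$ of $\mathbb{K}[X]$ defines a $\mathbb{G}_a$-subgroup $\{\exp(s\partial)\}$ of $\mathrm{Aut}(X)$; $\mathrm{SAut}(X)$ is the subgroup generated by all of them. A slice of an LND $\partial$ is $s$ with $\partial(s)=1$; $\mathrm{HD}^*(X)$ is the subalgebra of $\mathbb{K}[X]$ generated by kernels of all LNDs of $\mathbb{K}[X]$ having a slice. $Y$ is of type A if $\mathrm{HD}^*(X)=\mathbb{K}[X]$, type B if $\mathrm{HD}^*(X)$ is not finitely generated, type C if $Y$ is rigid and $\mathrm{HD}^*(X)=\mathbb{K}[Y]$; every $Y$ has exactly one type. *)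

theory Defs
  imports "HOL-Computational_Algebra.Polynomial"
begin

text \<open>Algebraic (coordinate-ring) model. A K-algebra is a commutative ring B together
  with a ring homomorphism c from the field K into B (the structure map).\<close>

definition alg_closed_field :: "'k::field itself \<Rightarrow> bool" where
  "alg_closed_field _ \<longleftrightarrow> (\<forall>p::'k poly. degree p > 0 \<longrightarrow> (\<exists>x. poly p x = 0))"

definition K_structure :: "('k::field \<Rightarrow> 'b::comm_ring_1) \<Rightarrow> bool" where
  "K_structure c \<longleftrightarrow> c 1 = 1 \<and> (\<forall>a b. c (a + b) = c a + c b) \<and> (\<forall>a b. c (a * b) = c a * c b)"

inductive_set alg_gen :: "('k \<Rightarrow> 'b::comm_ring_1) \<Rightarrow> 'b set \<Rightarrow> 'b set"
  for c :: "'k \<Rightarrow> 'b" and G :: "'b set" where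
  scalar: "c a \<in> alg_gen c G"
| gen: "g \<in> G \<Longrightarrow> g \<in> alg_gen c G"
| add: "x \<in> alg_gen c G \<Longrightarrow> y \<in> alg_gen c G \<Longrightarrow> x + y \<in> alg_gen c G"
| mult: "x \<in> alg_gen c G \<Longrightarrow> y \<in> alg_gen c G \<Longrightarrow> x * y \<in> alg_gen c G"

definition finitely_generated_alg :: "('k \<Rightarrow> 'b::comm_ring_1) \<Rightarrow> bool" where
  "finitely_generated_alg c \<longleftrightarrow> (\<exists>G. finite G \<and> alg_gen c G = UNIV)"

definition is_derivation :: "('k \<Rightarrow> 'b::comm_ring_1) \<Rightarrow> ('b \<Rightarrow> 'b) \<Rightarrow> bool" where
  "is_derivation c D \<longleftrightarrow>
     (\<forall>x y. D (x + y) = D x + D y) \<and>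
     (\<forall>a x. D (c a * x) = c a * D x) \<and>
     (\<forall>x y. D (x * y) = x * D y + y * D x)"

definition is_LND :: "('k \<Rightarrow> 'b::comm_ring_1) \<Rightarrow> ('b \<Rightarrow> 'b) \<Rightarrow> bool" where
  "is_LND c D \<longleftrightarrow> is_derivation c D \<and> (\<forall>x. \<exists>n. (D ^^ n) x = 0)"

definition rigid :: "('k \<Rightarrow> 'b::comm_ring_1) \<Rightarrow> bool" where
  "rigid c \<longleftrightarrow> (\<forall>D. is_LND c D \<longrightarrow> D = (\<lambda>_. 0))"

definition HD_star :: "('k \<Rightarrow> 'b::comm_ring_1) \<Rightarrow> 'b set" where
  "HD_star c = alg_gen c (\<Union>{ {x. D x = 0} | D. is_LND c D \<and> (\<exists>s. D s = 1)})"

text \<open>exp(s D) applied to f (finite sum since D is locally nilpotent).\<close>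
definition lnd_exp :: "('k::field_char_0 \<Rightarrow> 'b::comm_ring_1) \<Rightarrow> ('b \<Rightarrow> 'b) \<Rightarrow> 'k \<Rightarrow> 'b \<Rightarrow> 'b" where
  "lnd_exp c D s f = (\<Sum>n < (LEAST m. (D ^^ m) f = 0). c (s ^ n / fact n) * (D ^^ n) f)"

text \<open>Structure map of K[X] = K[Y][t].\<close>
definition poly_K :: "('k \<Rightarrow> 'a::comm_ring_1) \<Rightarrow> 'k \<Rightarrow> 'a poly" where
  "poly_K c a = [:c a:]"

end

(*
  Write A = K[Y] and B = K[V], so that K[X] = A[t], and let D be an LND of A[t] with a slice.
  Invariance of V x A^1 under every exp(s D), read as a polynomial identity in s (a Vandermonde
  argument), shows that D preserves the kernel of A[t] -> B[t]; so D descends to an LND D' of B[t].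
  As A is finitely generated, D' raises t-degrees by at most some k; take k minimal. The degree-k
  homogeneous component t^k (delta + e t d/dt) of D' (delta acting on coefficients) is again
  locally nilpotent. For k = 0, delta is an LND of B, hence zero by rigidity, and then e is
  nilpotent; for k > 0, exp of this component shows that -e is the t^k-coefficient of a unit of
  B[t]. As B is reduced, e = 0 either way, and then delta = 0 by rigidity. Minimality forces
  k = 0, so D' kills B and D' = D'(t) d/dt, where D'(t) is a unit, hence a constant, and
  ker D' = B. Thus HD*(X) maps into B, while t does not.
*)

theory Submission
  imports Defs
begin

definition is_ring_hom :: "('a::comm_ring_1 \<Rightarrow> 'b::comm_ring_1) \<Rightarrow> bool" where
  "is_ring_hom h \<longleftrightarrow> h 1 = 1 \<and> (\<forall>x y. h (x + y) = h x + h y) \<and> (\<forall>x y. h (x * y) = h x * h y)"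

lemma K_structure_iff_is_ring_hom: "K_structure c \<longleftrightarrow> is_ring_hom c"
  by (simp add: K_structure_def is_ring_hom_def)

lemma ring_hom_add: "is_ring_hom h \<Longrightarrow> h (x + y) = h x + h y"
  and ring_hom_mult: "is_ring_hom h \<Longrightarrow> h (x * y) = h x * h y"
  and ring_hom_one: "is_ring_hom h \<Longrightarrow> h 1 = 1"
  by (simp_all add: is_ring_hom_def)

lemma ring_hom_zero: "is_ring_hom h \<Longrightarrow> h 0 = 0"
  using ring_hom_add[of h 0 0] by simp

lemma ring_hom_uminus: "is_ring_hom h \<Longrightarrow> h (- x) = - h x"
  using ring_hom_add[of h x "- x"] ring_hom_zero[of h] by (simp add: minus_unique)

lemma ring_hom_diff: "is_ring_hom h \<Longrightarrow> h (x - y) = h x - h y"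
  using ring_hom_add[of h x "- y"] ring_hom_uminus[of h y] by simp

lemma ring_hom_sum: "is_ring_hom h \<Longrightarrow> h (sum f A) = (\<Sum>a\<in>A. h (f a))"
  by (induction A rule: infinite_finite_induct) (auto simp: ring_hom_zero ring_hom_add)

lemma ring_hom_power: "is_ring_hom h \<Longrightarrow> h (x ^ n) = h x ^ n"
  by (induction n) (auto simp: ring_hom_one ring_hom_mult)

lemma ring_hom_of_nat: "is_ring_hom h \<Longrightarrow> h (of_nat n) = of_nat n"
  by (induction n) (auto simp: ring_hom_zero ring_hom_one ring_hom_add)

lemma ring_hom_inverse_mult:
  "is_ring_hom (h :: 'a::field \<Rightarrow> 'b::comm_ring_1) \<Longrightarrow> a \<noteq> 0 \<Longrightarrow> h (inverse a) * h a = 1"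
  by (metis ring_hom_one ring_hom_mult left_inverse)

lemma is_ring_hom_comp: "is_ring_hom h \<Longrightarrow> is_ring_hom g \<Longrightarrow> is_ring_hom (g \<circ> h)"
  by (simp add: is_ring_hom_def)

lemma is_ring_hom_map_poly:
  assumes h: "is_ring_hom h"
  shows "is_ring_hom (map_poly h)"
proof -
  have h0: "h 0 = 0"
    using h by (rule ring_hom_zero)
  have "map_poly h (p * q) = map_poly h p * map_poly h q" for p q
    by (rule poly_eqI)
      (simp add: coeff_map_poly h0 coeff_mult ring_hom_sum[OF h] ring_hom_mult[OF h])
  moreover have "map_poly h (p + q) = map_poly h p + map_poly h q" for p q
    by (rule poly_eqI) (simp add: coeff_map_poly h0 ring_hom_add[OF h])
  ultimately show ?thesis
    using h by (simp add: is_ring_hom_def ring_hom_one)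
qed

lemma surj_map_poly:
  assumes "surj f" "f 0 = 0"
  shows "surj (map_poly f)"
proof -
  define f' where "f' y = (if y = 0 then 0 else inv f y)" for y
  have "f (f' y) = y" for y
    using assms by (simp add: f'_def surj_f_inv_f)
  then have "map_poly f (map_poly f' g) = g" for g
    by (intro poly_eqI) (simp add: coeff_map_poly f'_def assms(2))
  then show ?thesis
    by (rule surjI)
qed

lemma is_ring_hom_poly_K_iff: "is_ring_hom (poly_K c) \<longleftrightarrow> is_ring_hom c"
  by (auto simp: is_ring_hom_def poly_K_def one_pCons)

lemma map_poly_comp_poly_K:
  "is_ring_hom \<pi> \<Longrightarrow> map_poly \<pi> \<circ> poly_K c = poly_K (\<pi> \<circ> c)"
  by (auto simp: poly_K_def map_poly_pCons ring_hom_zero)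

section \<open>Derivations and their truncated exponentials\<close>

lemma is_derivationI:
  assumes "\<And>x y. E (x + y) = E x + E y" "\<And>x y. E (x * y) = x * E y + y * E x" "\<And>a. E (c a) = 0"
  shows "is_derivation c E"
  using assms by (simp add: is_derivation_def)

locale derivation =
  fixes c :: "'k::field_char_0 \<Rightarrow> 'b::comm_ring_1" and D :: "'b \<Rightarrow> 'b"
  assumes hom_c: "is_ring_hom c" and is_derivation_D: "is_derivation c D"
begin

lemma add: "D (x + y) = D x + D y"
  and scalar: "D (c a * x) = c a * D x"
  and leibniz: "D (x * y) = x * D y + y * D x"
  using is_derivation_D unfolding is_derivation_def by blast+

lemma zero [simp]: "D 0 = 0"
  using add[of 0 0] by simp

lemma one [simp]: "D 1 = 0"
  using leibniz[of 1 1] by simp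

lemma const [simp]: "D (c a) = 0"
  using scalar[of a 1] by simp

lemma diff: "D (x - y) = D x - D y"
  using add[of "x - y" y] by (simp add: eq_diff_eq)

lemma sum: "D (sum f A) = (\<Sum>a\<in>A. D (f a))"
  by (induction A rule: infinite_finite_induct) (auto simp: add)

lemma of_nat [simp]: "D (of_nat n) = 0"
  using const[of "of_nat n"] by (simp add: ring_hom_of_nat[OF hom_c])

lemma iterate_zero [simp]: "(D ^^ n) 0 = 0"
  by (induction n) auto

lemma iterate_add: "(D ^^ n) (x + y) = (D ^^ n) x + (D ^^ n) y"
  by (induction n) (auto simp: add)

lemma iterate_scalar: "(D ^^ n) (c a * x) = c a * (D ^^ n) x"
  by (induction n) (auto simp: scalar)

lemma iterate_sum: "(D ^^ n) (sum f A) = (\<Sum>a\<in>A. (D ^^ n) (f a))"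
  by (induction A rule: infinite_finite_induct) (auto simp: iterate_add)

lemma iterate_iterate: "(D ^^ m) ((D ^^ n) x) = (D ^^ (m + n)) x"
  by (simp add: funpow_add)

lemma iterate_eq_0_mono: "(D ^^ n) x = 0 \<Longrightarrow> n \<le> m \<Longrightarrow> (D ^^ m) x = 0"
  using iterate_iterate[of "m - n" n x] by simp

lemma iterate_mult:
  "(D ^^ n) (f * g) = (\<Sum>k\<le>n. of_nat (n choose k) * (D ^^ k) f * (D ^^ (n - k)) g)"
proof (induction n)
  case 0
  then show ?case by simp
next
  case (Suc n)
  define B where "B i j = (D ^^ i) f * (D ^^ j) g" for i j
  have DB: "D (of_nat m * B i j) = of_nat m * B (Suc i) j + of_nat m * B i (Suc j)" for m i j
    by (simp add: B_def leibniz algebra_simps)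
  have "(D ^^ Suc n) (f * g) = D (\<Sum>k\<le>n. of_nat (n choose k) * B k (n - k))"
    using Suc.IH by (simp add: B_def mult.assoc)
  also have "\<dots> = (\<Sum>k\<le>n. of_nat (n choose k) * B (Suc k) (n - k)) +
      (\<Sum>k\<le>n. of_nat (n choose k) * B k (Suc (n - k)))"
    by (simp add: sum DB sum.distrib)
  also have "(\<Sum>k\<le>n. of_nat (n choose k) * B k (Suc (n - k))) =
      (\<Sum>k\<le>Suc n. of_nat (n choose k) * B k (Suc n - k))"
    by (simp add: Suc_diff_le binomial_eq_0)
  also have "(\<Sum>k\<le>n. of_nat (n choose k) * B (Suc k) (n - k)) =
      (\<Sum>k\<le>Suc n. of_nat (if k = 0 then 0 else n choose (k - 1)) * B k (Suc n - k))"
    by (subst sum.atMost_Suc_shift) simp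
  also have "(\<Sum>k\<le>Suc n. of_nat (if k = 0 then 0 else n choose (k - 1)) * B k (Suc n - k)) +
      (\<Sum>k\<le>Suc n. of_nat (n choose k) * B k (Suc n - k)) =
      (\<Sum>k\<le>Suc n. of_nat (Suc n choose k) * B k (Suc n - k))"
    by (subst sum.distrib[symmetric], rule sum.cong) (auto simp: algebra_simps choose_reduce_nat)
  finally show ?case
    by (simp add: B_def mult.assoc)
qed

definition exp_trunc :: "nat \<Rightarrow> 'k \<Rightarrow> 'b \<Rightarrow> 'b" where
  "exp_trunc N l f = (\<Sum>n<N. c (l ^ n / fact n) * (D ^^ n) f)"

lemma lnd_exp_eq_exp_trunc: "lnd_exp c D l f = exp_trunc (LEAST m. (D ^^ m) f = 0) l f"
  by (simp add: lnd_exp_def exp_trunc_def)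

lemma exp_trunc_mono:
  assumes "(D ^^ N) f = 0" "N \<le> N'"
  shows "exp_trunc N' l f = exp_trunc N l f"
  unfolding exp_trunc_def
  by (rule sum.mono_neutral_right) (use assms iterate_eq_0_mono in auto)

lemma exp_trunc_0:
  assumes "(D ^^ N) f = 0"
  shows "exp_trunc N 0 f = f"
proof (cases N)
  case 0
  then show ?thesis
    using assms by (simp add: exp_trunc_def)
next
  case (Suc M)
  have "exp_trunc N 0 f = (\<Sum>n\<in>{0}. c (0 ^ n / fact n) * (D ^^ n) f)"
    unfolding exp_trunc_def
    by (rule sum.mono_neutral_right) (use Suc hom_c in \<open>auto simp: ring_hom_zero power_0_left\<close>)
  then show ?thesis
    using hom_c by (simp add: ring_hom_one)
qed

lemma exp_trunc_mult:
  assumes f: "(D ^^ a) f = 0" and g: "(D ^^ b) g = 0"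
  shows "exp_trunc (a + b) l (f * g) = exp_trunc a l f * exp_trunc b l g"
proof -
  define X where "X i j = (c (l ^ i / fact i) * (D ^^ i) f) * (c (l ^ j / fact j) * (D ^^ j) g)"
    for i j
  have coeff: "c (l ^ n / fact n) * of_nat (n choose k)
      = c (l ^ k / fact k) * c (l ^ (n - k) / fact (n - k))"
    if "k \<le> n" for n k
  proof -
    have "l ^ n / fact n * of_nat (n choose k) = l ^ k / fact k * (l ^ (n - k) / fact (n - k))"
      using that by (simp add: binomial_fact power_add[symmetric] field_simps)
    then show ?thesis
      by (metis ring_hom_mult[OF hom_c] ring_hom_of_nat[OF hom_c])
  qed
  have vanish: "X i j = 0" if "a \<le> i \<or> b \<le> j" for i j
    using that iterate_eq_0_mono[OF f, of i] iterate_eq_0_mono[OF g, of j] by (auto simp: X_def)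
  have "exp_trunc (a + b) l (f * g) = (\<Sum>n<a + b. \<Sum>k\<le>n. X k (n - k))"
    unfolding exp_trunc_def iterate_mult sum_distrib_left
    by (intro sum.cong refl) (simp add: X_def coeff[symmetric] mult_ac)
  also have "\<dots> = (\<Sum>(i, j)\<in>{(i, j). i + j < a + b}. X i j)"
    by (rule sum.triangle_reindex[symmetric])
  also have "\<dots> = (\<Sum>(i, j)\<in>{..<a} \<times> {..<b}. X i j)"
    by (rule sum.mono_neutral_right)
      (auto simp: vanish simp flip: not_le intro: finite_subset[of _ "{..<a + b} \<times> {..<a + b}"])
  also have "\<dots> = exp_trunc a l f * exp_trunc b l g"
    unfolding exp_trunc_def sum_product sum.cartesian_product X_def by simp
  finally show ?thesis .
qed

lemma exp_trunc_exp_trunc: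
  assumes f: "(D ^^ N) f = 0"
  shows "exp_trunc N m (exp_trunc N l f) = exp_trunc N (m + l) f"
proof -
  define Y where "Y i j = c (m ^ i / fact i) * c (l ^ j / fact j) * (D ^^ (i + j)) f" for i j
  have vanish: "Y i j = 0" if "N \<le> i + j" for i j
    using iterate_eq_0_mono[OF f that] by (simp add: Y_def)
  have "exp_trunc N m (exp_trunc N l f) = (\<Sum>(i, j)\<in>{..<N} \<times> {..<N}. Y i j)"
    unfolding exp_trunc_def iterate_sum iterate_scalar iterate_iterate sum_distrib_left
      sum.cartesian_product
    by (simp add: Y_def mult_ac add.commute)
  also have "\<dots> = (\<Sum>(i, j)\<in>{(i, j). i + j < N}. Y i j)"
    by (rule sum.mono_neutral_right) (auto simp: vanish simp flip: not_le)
  also have "\<dots> = (\<Sum>n<N. \<Sum>k\<le>n. Y k (n - k))"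
    by (rule sum.triangle_reindex)
  also have "\<dots> = exp_trunc N (m + l) f"
    unfolding exp_trunc_def
  proof (rule sum.cong[OF refl])
    fix n
    have "(m + l) ^ n / fact n = (\<Sum>k\<le>n. m ^ k / fact k * (l ^ (n - k) / fact (n - k)))"
      unfolding binomial_ring sum_divide_distrib
      by (intro sum.cong refl) (simp add: binomial_fact field_simps)
    then have "c ((m + l) ^ n / fact n)
        = (\<Sum>k\<le>n. c (m ^ k / fact k) * c (l ^ (n - k) / fact (n - k)))"
      by (simp only: ring_hom_sum[OF hom_c] ring_hom_mult[OF hom_c])
    then show "(\<Sum>k\<le>n. Y k (n - k)) = c ((m + l) ^ n / fact n) * (D ^^ n) f"
      by (simp add: Y_def sum_distrib_right)
  qed
  finally show ?thesis .
qed

lemma exp_trunc_inverse: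
  assumes "(D ^^ N) f = 0"
  shows "exp_trunc N (- l) (exp_trunc N l f) = f"
  using exp_trunc_exp_trunc[OF assms, of "- l" l] exp_trunc_0[OF assms] by simp

lemma iterate_exp_trunc:
  assumes "(D ^^ N) f = 0"
  shows "(D ^^ N) (exp_trunc N l f) = 0"
  unfolding exp_trunc_def iterate_sum iterate_scalar iterate_iterate
  using iterate_eq_0_mono[OF assms] by (intro sum.neutral) simp

lemma exp_trunc_eq_mult_imp_unit:
  assumes nil_x: "(D ^^ N) x = 0" and nil_U: "(D ^^ N') (U 1) = 0"
    and exp_x: "\<And>l. exp_trunc N l x = x * U l" and cancel: "\<And>y z. x * y = x * z \<Longrightarrow> y = z"
  shows "U (- 1) * exp_trunc N' (- 1) (U 1) = 1"
proof (rule cancel)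
  have "x * 1 = exp_trunc N (- 1) (x * U 1)"
    using exp_trunc_inverse[OF nil_x, of 1] by (simp add: exp_x)
  also have "\<dots> = exp_trunc (N + N') (- 1) (x * U 1)"
    using iterate_exp_trunc[OF nil_x, of 1]
    by (intro exp_trunc_mono[symmetric]) (simp_all add: exp_x)
  also have "\<dots> = x * (U (- 1) * exp_trunc N' (- 1) (U 1))"
    by (simp add: exp_trunc_mult[OF nil_x nil_U] exp_x mult.assoc)
  finally show "x * (U (- 1) * exp_trunc N' (- 1) (U 1)) = x * 1" ..
qed

lemma nilpotent_sum:
  assumes "finite A" "\<And>i. i \<in> A \<Longrightarrow> \<exists>N. (D ^^ N) (f i) = 0"
  shows "\<exists>N. (D ^^ N) (sum f A) = 0"
  using assms
proof (induction A rule: finite_induct)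
  case (insert i A)
  then obtain N N' where "(D ^^ N) (f i) = 0" "(D ^^ N') (sum f A) = 0"
    by blast
  then have "(D ^^ max N N') (f i + sum f A) = 0"
    by (simp add: iterate_add iterate_eq_0_mono)
  then show ?case
    using insert.hyps by auto
qed simp

lemma map_poly_D_add: "map_poly D (x + y) = map_poly D x + map_poly D y"
  by (rule poly_eqI) (simp add: coeff_map_poly add)

lemma map_poly_D_mult: "map_poly D (x * y) = x * map_poly D y + y * map_poly D x"
proof (rule poly_eqI)
  fix n
  show "coeff (map_poly D (x * y)) n = coeff (x * map_poly D y + y * map_poly D x) n"
    by (simp add: coeff_map_poly coeff_mult sum leibniz sum.distrib mult.commute[of y]
        mult.commute[of "coeff y _"])
qed

end

lemma derivation_if_is_LND: "is_LND c D \<Longrightarrow> is_ring_hom c \<Longrightarrow> derivation c D"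
  by (simp add: derivation_def is_LND_def)

section \<open>Polynomials over a reduced ring\<close>

lemma coeff_mult_degree_le_sum:
  fixes p q :: "'a::comm_ring_1 poly"
  assumes "degree p \<le> a" "degree q \<le> b"
  shows "coeff (p * q) (a + b) = coeff p a * coeff q b"
proof (cases "degree p = a \<and> degree q = b")
  case True
  then show ?thesis
    by (auto simp: coeff_mult_degree_sum)
next
  case False
  then have "degree (p * q) < a + b"
    using degree_mult_le[of p q] assms by linarith
  then show ?thesis
    using False assms by (auto simp: coeff_eq_0)
qed

lemma degree_eq_0_if_mult_eq_1:
  fixes u w :: "'a::comm_ring_1 poly"
  assumes reduced: "\<And>(x::'a) n. x ^ n = 0 \<Longrightarrow> x = 0" and uw: "u * w = 1"
  shows "degree u = 0"
proof (rule ccontr)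
  assume "degree u \<noteq> 0"
  define n m a where "n = degree u" and "m = degree w" and "a = lead_coeff u"
  have "n > 0" "a \<noteq> 0"
    using \<open>degree u \<noteq> 0\<close> by (auto simp: n_def a_def)
  \<comment> \<open>Comparing the coefficients of \<open>u * w = 1\<close> from the top down kills \<open>w\<close> modulo powers of \<open>a\<close>.\<close>
  have "a ^ Suc r * coeff w (m - r) = 0" if "r \<le> m" for r
    using that
  proof (induction r rule: less_induct)
    case (less r)
    define N where "N = n + m - r"
    have vanish: "a ^ r * (coeff u i * coeff w (N - i)) = 0" if "i \<noteq> n" for i
    proof (cases "n < i \<or> m < N - i")
      case True
      then show ?thesis
        by (auto simp: n_def m_def coeff_eq_0)
    next
      case False
      define r' where "r' = m - (N - i)"
      have "r' < r" "r' \<le> m" "N - i = m - r'" and r_split: "r = (r - Suc r') + Suc r'"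
        using False \<open>i \<noteq> n\<close> less.prems unfolding r'_def N_def by linarith+
      then have IH: "a ^ Suc r' * coeff w (N - i) = 0"
        using less.IH by simp
      have "a ^ r = a ^ (r - Suc r') * a ^ Suc r'"
        by (subst r_split) (simp only: power_add)
      then have "a ^ r * (coeff u i * coeff w (N - i))
          = (a ^ (r - Suc r') * coeff u i) * (a ^ Suc r' * coeff w (N - i))"
        by (simp only: mult_ac)
      then show ?thesis
        using IH by simp
    qed
    have "0 = a ^ r * coeff (u * w) N"
      using \<open>n > 0\<close> less.prems by (simp add: uw N_def)
    also have "\<dots> = (\<Sum>i\<le>N. a ^ r * (coeff u i * coeff w (N - i)))"
      by (simp add: coeff_mult sum_distrib_left)
    also have "\<dots> = (\<Sum>i\<in>{n}. a ^ r * (coeff u i * coeff w (N - i)))"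
      by (rule sum.mono_neutral_right) (use vanish less.prems in \<open>auto simp: N_def\<close>)
    finally show ?case
      using less.prems by (simp add: a_def n_def N_def mult_ac)
  qed
  from this[of m] have "a ^ Suc m * coeff w 0 = 0"
    by simp
  moreover have "coeff u 0 * coeff w 0 = 1"
    using arg_cong[OF uw, of "\<lambda>p. coeff p 0"] by (simp add: coeff_mult)
  ultimately have "a ^ Suc m = 0"
    by (metis mult.left_commute mult_1_right mult_zero_right)
  then show False
    using reduced \<open>a \<noteq> 0\<close> by blast
qed

definition formal_pderiv :: "'a::comm_ring_1 poly \<Rightarrow> 'a poly" where
  "formal_pderiv g = (\<Sum>i<degree g. monom (of_nat (Suc i) * coeff g (Suc i)) i)"

lemma coeff_formal_pderiv: "coeff (formal_pderiv g) n = of_nat (Suc n) * coeff g (Suc n)"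
  by (cases "n < degree g") (auto simp: formal_pderiv_def coeff_sum coeff_monom coeff_eq_0)

lemma formal_pderiv_pCons: "formal_pderiv (pCons a h) = h + [:0, 1:] * formal_pderiv h"
  by (rule poly_eqI) (auto simp: coeff_formal_pderiv coeff_pCons algebra_simps split: nat.split)

lemma of_nat_Suc_mult_eq_0_imp:
  fixes \<kappa> :: "'k::field_char_0 \<Rightarrow> 'a::comm_ring_1" and x :: 'a
  assumes "is_ring_hom \<kappa>" "of_nat (Suc n) * x = 0"
  shows "x = 0"
proof -
  have inv: "\<kappa> (inverse (of_nat (Suc n))) * of_nat (Suc n) = 1"
    using ring_hom_inverse_mult[OF assms(1), of "of_nat (Suc n)"]
    by (simp add: ring_hom_of_nat[OF assms(1)] del: of_nat_Suc)
  have "x = \<kappa> (inverse (of_nat (Suc n))) * (of_nat (Suc n) * x)"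
    by (simp only: mult.assoc[symmetric] inv mult_1)
  then show ?thesis
    using assms(2) by simp
qed

lemma derivation_poly_eq_formal_pderiv_mult:
  assumes "derivation (poly_K \<kappa>) D" and kills_coeffs: "\<And>r. D [:r:] = 0"
  shows "D g = formal_pderiv g * D [:0, 1:]"
proof -
  interpret derivation "poly_K \<kappa>" D
    by (rule assms(1))
  show ?thesis
  proof (induction g rule: pCons_induct)
    case 0
    then show ?case
      by (simp add: formal_pderiv_def)
  next
    case (pCons a h)
    have "D (pCons a h) = D ([:a:] + [:0, 1:] * h)"
      by simp
    also have "\<dots> = [:0, 1:] * D h + h * D [:0, 1:]"
      by (simp only: add leibniz kills_coeffs add_0_left)
    finally show ?case
      using pCons.IH by (simp add: formal_pderiv_pCons algebra_simps)
  qed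
qed

lemma derivation_poly_kernel_degree_0:
  fixes \<kappa> :: "'k::field_char_0 \<Rightarrow> 'v::comm_ring_1"
  assumes der: "derivation (poly_K \<kappa>) D" and kills_coeffs: "\<And>r. D [:r:] = 0"
    and reduced: "\<And>(x::'v) n. x ^ n = 0 \<Longrightarrow> x = 0"
    and slice: "D s = 1" and kernel: "D g = 0"
  shows "degree g = 0"
proof -
  have hom: "is_ring_hom \<kappa>"
    using derivation.hom_c[OF der] by (simp add: is_ring_hom_poly_K_iff)
  define T where "T = D [:0, 1:]"
  have unit: "T * formal_pderiv s = 1"
    using derivation_poly_eq_formal_pderiv_mult[OF der kills_coeffs, of s] slice
    by (simp add: T_def mult.commute)
  define b b' where "b = coeff T 0" and "b' = coeff (formal_pderiv s) 0"
  have T: "T = [:b:]"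
    using degree_eq_0_if_mult_eq_1[OF reduced unit] by (simp add: b_def degree_0_id)
  have "b' * b = 1"
    using arg_cong[OF unit, of "\<lambda>p. coeff p 0"]
    by (simp add: b_def b'_def coeff_mult_0 mult.commute)
  then have "formal_pderiv g = smult b' (formal_pderiv g * T)"
    by (simp add: T)
  also have "formal_pderiv g * T = 0"
    using derivation_poly_eq_formal_pderiv_mult[OF der kills_coeffs, of g] kernel
    by (simp add: T_def)
  finally have "formal_pderiv g = 0"
    by simp
  then have "of_nat (Suc n) * coeff g (Suc n) = 0" for n
    using coeff_formal_pderiv[of g n] by (simp del: of_nat_Suc)
  then have "coeff g (Suc n) = 0" for n
    by (rule of_nat_Suc_mult_eq_0_imp[OF hom])
  then have "degree g \<le> 0"
    by (intro degree_le) (auto simp: gr0_conv_Suc)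
  then show ?thesis
    by simp
qed

section \<open>The leading part of a derivation of \<open>R[t]\<close>\<close>

definition euler_op :: "'a::comm_ring_1 poly \<Rightarrow> 'a poly" where
  "euler_op g = [:0, 1:] * formal_pderiv g"

lemma coeff_euler_op: "coeff (euler_op g) n = of_nat n * coeff g n"
  by (cases n) (simp_all add: euler_op_def coeff_formal_pderiv del: of_nat_Suc)

lemma euler_op_add: "euler_op (x + y) = euler_op x + euler_op y"
  by (rule poly_eqI) (simp add: coeff_euler_op algebra_simps)

lemma euler_op_mult: "euler_op (x * y) = x * euler_op y + y * euler_op x"
proof (rule poly_eqI)
  fix n
  have "coeff (euler_op (x * y)) n
      = (\<Sum>i\<le>n. (of_nat i + of_nat (n - i)) * (coeff x i * coeff y (n - i)))"
    unfolding coeff_euler_op coeff_mult sum_distrib_left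
    by (intro sum.cong refl) (simp flip: of_nat_add)
  also have "\<dots> = coeff (x * euler_op y + euler_op x * y) n"
    unfolding coeff_add coeff_mult coeff_euler_op sum.distrib[symmetric]
    by (intro sum.cong refl) (simp add: algebra_simps)
  finally show "coeff (euler_op (x * y)) n = coeff (x * euler_op y + y * euler_op x) n"
    by (simp add: mult.commute)
qed

lemma euler_op_const [simp]: "euler_op [:a:] = 0"
  by (rule poly_eqI) (simp add: coeff_euler_op coeff_pCons split: nat.split)

text \<open>If \<open>D\<close> raises the \<open>t\<close>-degree by at most \<open>k\<close>, then \<open>lead_part\<close> is its homogeneous
  component of degree \<open>k\<close>: \<open>t\<^sup>k (\<delta> + e t d/dt)\<close> with \<open>\<delta> = lead_der\<close> acting on
  coefficients and \<open>e = lead_X\<close>.\<close>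

locale poly_derivation_deg_bound =
  derivation "poly_K \<kappa>" D for \<kappa> :: "'k::field_char_0 \<Rightarrow> 'v::comm_ring_1" and D +
  fixes k :: nat
  assumes degree_D_const_le: "degree (D [:a:]) \<le> k"
    and degree_D_X_le: "degree (D [:0, 1:]) \<le> Suc k"
begin

definition lead_der :: "'v \<Rightarrow> 'v" where
  "lead_der a = coeff (D [:a:]) k"

definition lead_X :: 'v where
  "lead_X = coeff (D [:0, 1:]) (Suc k)"

definition lead_part :: "'v poly \<Rightarrow> 'v poly" where
  "lead_part g = monom 1 k * (map_poly lead_der g + smult lead_X (euler_op g))"

lemma is_ring_hom_\<kappa>: "is_ring_hom \<kappa>"
  using hom_c by (simp add: is_ring_hom_poly_K_iff)

sublocale lead_der: derivation \<kappa> lead_der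
proof
  show "is_derivation \<kappa> lead_der"
  proof (rule is_derivationI)
    show "lead_der (x + y) = lead_der x + lead_der y" for x y
      using add[of "[:x:]" "[:y:]"] by (simp add: lead_der_def)
    show "lead_der (x * y) = x * lead_der y + y * lead_der x" for x y
      using leibniz[of "[:x:]" "[:y:]"] by (simp add: lead_der_def mult.commute)
    show "lead_der (\<kappa> a) = 0" for a
      using const[of a] by (simp add: lead_der_def poly_K_def)
  qed
qed (rule is_ring_hom_\<kappa>)

lemma degree_coeff_D_le:
  "degree g \<le> j \<Longrightarrow> degree (D g) \<le> j + k \<and>
    coeff (D g) (j + k) = lead_der (coeff g j) + of_nat j * coeff g j * lead_X"
proof (induction g arbitrary: j rule: pCons_induct)
  case (pCons a h)
  show ?case
  proof (cases j)
    case 0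
    with pCons.prems have "pCons a h = [:a:]"
      by (auto split: if_splits)
    then show ?thesis
      using degree_D_const_le[of a] 0 by (simp add: lead_der_def)
  next
    case (Suc j')
    with pCons.prems have "degree h \<le> j'"
      by (auto simp: degree_pCons_eq_if split: if_splits)
    note IH = pCons.IH[OF this]
    have D_pCons: "D (pCons a h) = D [:a:] + [:0, 1:] * D h + h * D [:0, 1:]"
      using add[of "[:a:]" "[:0, 1:] * h"] leibniz[of "[:0, 1:]" h] by simp
    have "degree (D [:a:]) \<le> j + k" "degree ([:0, 1:] * D h) \<le> j + k"
      "degree (h * D [:0, 1:]) \<le> j + k"
      using degree_D_const_le[of a] IH \<open>degree h \<le> j'\<close> degree_D_X_le Suc
        degree_mult_le[of h "D [:0, 1:]"] by (auto simp: degree_pCons_eq_if)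
    moreover have "coeff (h * D [:0, 1:]) (j + k) = coeff h j' * lead_X"
      using coeff_mult_degree_le_sum[OF \<open>degree h \<le> j'\<close> degree_D_X_le] Suc
      by (simp add: lead_X_def)
    moreover have "coeff (D [:a:]) (j + k) = 0"
      using degree_D_const_le[of a] Suc by (simp add: coeff_eq_0)
    ultimately show ?thesis
      using IH Suc unfolding D_pCons by (auto intro!: degree_add_le simp: algebra_simps)
  qed
qed simp

lemma coeff_lead_part:
  "coeff (lead_part g) n =
    (if n < k then 0 else lead_der (coeff g (n - k)) + of_nat (n - k) * coeff g (n - k) * lead_X)"
  by (simp add: lead_part_def coeff_monom_mult coeff_map_poly coeff_euler_op mult_ac)

lemma degree_lead_part_le: "degree g \<le> j \<Longrightarrow> degree (lead_part g) \<le> j + k"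
  by (intro degree_le) (auto simp: coeff_lead_part coeff_eq_0)

lemma lead_part_monom:
  "lead_part (monom b i) = monom (lead_der b + of_nat i * b * lead_X) (i + k)"
  by (rule poly_eqI) (auto simp: coeff_lead_part coeff_monom)

sublocale lead_part: derivation "poly_K \<kappa>" lead_part
proof
  show "is_derivation (poly_K \<kappa>) lead_part"
  proof (rule is_derivationI)
    show "lead_part (x + y) = lead_part x + lead_part y" for x y
      by (simp add: lead_part_def lead_der.map_poly_D_add euler_op_add smult_add_right
          algebra_simps)
    show "lead_part (x * y) = x * lead_part y + y * lead_part x" for x y
      by (simp add: lead_part_def lead_der.map_poly_D_mult euler_op_mult smult_add_right
          algebra_simps)
    show "lead_part (poly_K \<kappa> a) = 0" for a
      by (simp add: lead_part_def poly_K_def map_poly_pCons)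
  qed
qed (rule hom_c)

lemma degree_coeff_iterate_D_le:
  assumes "degree g \<le> j"
  shows "degree ((D ^^ n) g) \<le> j + n * k \<and>
    coeff ((D ^^ n) g) (j + n * k) = coeff ((lead_part ^^ n) g) (j + n * k)"
proof (induction n)
  case (Suc n)
  have "degree ((lead_part ^^ n) g) \<le> j + n * k"
    using assms by (induction n) (auto dest: degree_lead_part_le[of _ "_ + _"] simp: add.assoc)
  then show ?case
    using Suc degree_coeff_D_le[of "(D ^^ n) g" "j + n * k"]
    by (simp add: coeff_lead_part add.assoc add.commute[of k])
qed (simp add: assms)

lemma iterate_lead_part_monom: "\<exists>b'. (lead_part ^^ n) (monom b j) = monom b' (j + n * k)"
  by (induction n) (auto simp: lead_part_monom add.assoc add.commute[of k])

lemma is_LND_lead_part: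
  assumes "is_LND (poly_K \<kappa>) D"
  shows "is_LND (poly_K \<kappa>) lead_part"
proof -
  have "\<exists>N. (lead_part ^^ N) (monom a j) = 0" for a j
  proof -
    obtain N where "(D ^^ N) (monom a j) = 0"
      using assms by (auto simp: is_LND_def)
    moreover obtain b' where "(lead_part ^^ N) (monom a j) = monom b' (j + N * k)"
      using iterate_lead_part_monom by blast
    ultimately show ?thesis
      using degree_coeff_iterate_D_le[of "monom a j" j N] by (auto simp: degree_monom_le)
  qed
  then have "\<exists>N. (lead_part ^^ N) (\<Sum>i\<le>degree g. monom (coeff g i) i) = 0" for g
    by (intro lead_part.nilpotent_sum) auto
  then show ?thesis
    using lead_part.is_derivation_D by (simp add: is_LND_def poly_as_sum_of_monoms)
qed

context
  assumes LND: "is_LND (poly_K \<kappa>) D" and rigid: "rigid \<kappa>"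
    and reduced: "\<And>(x::'v) n. x ^ n = 0 \<Longrightarrow> x = 0"
begin

lemma lead_der_eq_0:
  assumes "k = 0 \<or> lead_X = 0"
  shows "lead_der b = 0"
proof -
  have "lead_part (monom a (n * k)) = monom (lead_der a) (Suc n * k)" for a n
    using assms lead_part_monom[of a "n * k"] by (auto simp: add.commute)
  then have pow: "(lead_part ^^ n) [:a:] = monom ((lead_der ^^ n) a) (n * k)" for a n
    by (induction n) (simp_all flip: monom_0)
  have "\<exists>n. (lead_der ^^ n) a = 0" for a
  proof -
    obtain n where "(lead_part ^^ n) [:a:] = 0"
      using is_LND_lead_part[OF LND] by (auto simp: is_LND_def)
    then show ?thesis
      using pow[of n a] by auto
  qed
  then have "is_LND \<kappa> lead_der"
    using lead_der.is_derivation_D by (simp add: is_LND_def)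
  then have "lead_der = (\<lambda>_. 0)"
    using rigid by (simp add: rigid_def)
  then show ?thesis
    by simp
qed

lemma lead_X_eq_0_if_k_eq_0:
  assumes "k = 0"
  shows "lead_X = 0"
proof -
  have "lead_part (monom b 1) = monom (lead_X * b) 1" for b
    using lead_part_monom[of b 1] lead_der_eq_0[of b] assms by (simp add: mult.commute)
  then have pow: "(lead_part ^^ n) (monom 1 1) = monom (lead_X ^ n) 1" for n
    by (induction n) simp_all
  obtain n where "(lead_part ^^ n) (monom 1 1) = 0"
    using is_LND_lead_part[OF LND] by (auto simp: is_LND_def)
  then have "lead_X ^ n = 0"
    using pow[of n] by simp
  then show ?thesis
    by (rule reduced)
qed

lemma lead_X_eq_0_if_k_pos:
  assumes "k > 0"
  shows "lead_X = 0"
proof -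
  define X :: "'v poly" where "X = monom 1 1"
  obtain N0 where "(lead_part ^^ N0) X = 0"
    using is_LND_lead_part[OF LND] by (auto simp: is_LND_def)
  define N where "N = max N0 2"
  then have nil_X: "(lead_part ^^ N) X = 0" and "1 < N"
    using lead_part.iterate_eq_0_mono[OF \<open>(lead_part ^^ N0) X = 0\<close>] by auto
  define p where "p n = coeff ((lead_part ^^ n) X) (Suc (n * k))" for n
  have iterate_X: "(lead_part ^^ n) X = monom (p n) (Suc (n * k))" for n
    using iterate_lead_part_monom[of n 1 1] by (auto simp: p_def X_def)
  have "p 1 = lead_X"
    using iterate_X[of 1] lead_part_monom[of 1 1] by (simp add: X_def)
  \<comment> \<open>\<open>exp (l \<cdot> lead_part) t = t \<cdot> U l\<close>, so \<open>U (-1)\<close> is a unit; its \<open>t\<^sup>k\<close>-coefficient is \<open>-lead_X\<close>.\<close>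
  define U where "U l = (\<Sum>n<N. monom (\<kappa> (l ^ n / fact n) * p n) (n * k))" for l
  have exp_X: "lead_part.exp_trunc N l X = X * U l" for l
    unfolding lead_part.exp_trunc_def U_def iterate_X sum_distrib_left
    by (intro sum.cong refl) (simp add: X_def poly_K_def mult_monom smult_monom)
  obtain N' where "(lead_part ^^ N') (U 1) = 0"
    using is_LND_lead_part[OF LND] by (auto simp: is_LND_def)
  then have "U (- 1) * lead_part.exp_trunc N' (- 1) (U 1) = 1"
    by (rule lead_part.exp_trunc_eq_mult_imp_unit[OF nil_X _ exp_X]) (simp add: X_def monom_Suc)
  then have "coeff (U (- 1)) k = 0"
    using degree_eq_0_if_mult_eq_1[OF reduced] assms by (simp add: coeff_eq_0)
  moreover have "n * k = k \<longleftrightarrow> n = 1" for n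
    using assms by (cases n) auto
  then have "coeff (U (- 1)) k = \<kappa> (- 1) * p 1"
    using \<open>1 < N\<close> by (simp add: U_def coeff_sum coeff_monom)
  ultimately show ?thesis
    using \<open>p 1 = lead_X\<close>
    by (simp add: ring_hom_uminus[OF is_ring_hom_\<kappa>] ring_hom_one[OF is_ring_hom_\<kappa>])
qed

end

end

theorem LND_poly_kills_coeffs:
  fixes \<kappa> :: "'k::field_char_0 \<Rightarrow> 'v::comm_ring_1"
  assumes LND: "is_LND (poly_K \<kappa>) D" and hom: "is_ring_hom \<kappa>" and rigid: "rigid \<kappa>"
    and reduced: "\<And>(x::'v) n. x ^ n = 0 \<Longrightarrow> x = 0"
    and bounded: "\<And>a. degree (D [:a:]) \<le> M"
  shows "D [:a:] = 0"
proof -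
  define bounded_by where
    "bounded_by k \<longleftrightarrow> (\<forall>a. degree (D [:a:]) \<le> k) \<and> degree (D [:0, 1:]) \<le> Suc k" for k
  have "bounded_by (max M (degree (D [:0, 1:])))"
    using bounded by (auto simp: bounded_by_def le_max_iff_disj)
  define k where "k = (LEAST k. bounded_by k)"
  have "bounded_by k"
    unfolding k_def by (rule LeastI) fact
  have k_least: "k \<le> k'" if "bounded_by k'" for k'
    unfolding k_def using that by (rule Least_le)
  interpret poly_derivation_deg_bound \<kappa> D k
    using LND hom \<open>bounded_by k\<close>
    by unfold_locales (simp_all add: is_LND_def is_ring_hom_poly_K_iff bounded_by_def)
  have "lead_X = 0"
    using lead_X_eq_0_if_k_eq_0[OF LND rigid] lead_X_eq_0_if_k_pos[OF LND rigid] reduced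
    by blast
  then have top_0: "coeff (D [:b:]) k = 0" "coeff (D [:0, 1:]) (Suc k) = 0" for b
    using lead_der_eq_0[OF LND rigid] reduced by (auto simp: lead_der_def lead_X_def)
  have drop_top: "p = 0 \<or> degree p < n" if "degree p \<le> n" "coeff p n = 0" for p :: "'v poly" and n
    using that by (metis le_neq_implies_less leading_coeff_0_iff)
  have "k = 0"
  proof (rule ccontr)
    assume "k \<noteq> 0"
    have "degree (D [:a:]) \<le> k - 1" for a
      using drop_top[OF degree_D_const_le[of a] top_0(1)] by auto
    moreover have "degree (D [:0, 1:]) \<le> Suc (k - 1)"
      using drop_top[OF degree_D_X_le top_0(2)] \<open>k \<noteq> 0\<close> by auto
    ultimately have "bounded_by (k - 1)"
      by (simp add: bounded_by_def)
    then show False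
      using k_least \<open>k \<noteq> 0\<close> by fastforce
  qed
  then show ?thesis
    using drop_top[OF degree_D_const_le top_0(1)] by simp
qed

section \<open>Descent to \<open>V\<close>\<close>

lemma sum_powers_eq_0_imp_eq_0:
  fixes \<sigma> :: "'k::field_char_0 \<Rightarrow> 'r::comm_ring_1"
  assumes hom: "is_ring_hom \<sigma>"
  shows "(\<And>l. (\<Sum>i<N. \<sigma> l ^ i * h i) = 0) \<Longrightarrow> n < N \<Longrightarrow> h n = 0"
proof (induction N arbitrary: h n)
  case (Suc N)
  \<comment> \<open>Eliminate the top coefficient by comparing the sums at \<open>2 l\<close> and at \<open>l\<close>.\<close>
  define h' where "h' i = \<sigma> (2 ^ i - 2 ^ N) * h i" for i
  have "(\<Sum>i<N. \<sigma> l ^ i * h' i) = 0" for l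
  proof -
    have "(\<Sum>i<Suc N. \<sigma> (2 * l) ^ i * h i) - \<sigma> 2 ^ N * (\<Sum>i<Suc N. \<sigma> l ^ i * h i)
        = (\<Sum>i<Suc N. \<sigma> l ^ i * h' i)"
      unfolding sum_distrib_left sum_subtractf[symmetric]
      by (intro sum.cong refl)
        (simp add: h'_def ring_hom_diff[OF hom] ring_hom_power[OF hom] ring_hom_mult[OF hom]
          power_mult_distrib algebra_simps)
    also have "\<dots> = (\<Sum>i<N. \<sigma> l ^ i * h' i)"
      by (simp add: h'_def ring_hom_zero[OF hom])
    finally show ?thesis
      using Suc.prems(1) by simp
  qed
  then have h'_0: "h' i = 0" if "i < N" for i
    using Suc.IH that by blast
  have h_0: "h i = 0" if "i < N" for i
  proof -
    have "(2::nat) ^ i \<noteq> 2 ^ N"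
      using that by simp
    then have "(2::'k) ^ i \<noteq> 2 ^ N"
      by (metis of_nat_eq_iff of_nat_numeral of_nat_power)
    then have "\<sigma> (inverse (2 ^ i - 2 ^ N)) * \<sigma> (2 ^ i - 2 ^ N) = 1"
      by (intro ring_hom_inverse_mult[OF hom]) simp
    then have "h i = \<sigma> (inverse (2 ^ i - 2 ^ N)) * h' i"
      by (simp add: h'_def mult.assoc[symmetric])
    then show ?thesis
      using h'_0[OF that] by simp
  qed
  have "(\<Sum>i<Suc N. \<sigma> 1 ^ i * h i) = 0"
    using Suc.prems(1) by blast
  then have "h N = 0"
    using h_0 by (simp add: ring_hom_one[OF hom])
  then show ?case
    using h_0 Suc.prems(2) less_Suc_eq by auto
qed simp

lemma LND_image_eq_0_if_exp_orbit_vanishes: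
  fixes c :: "'k::field_char_0 \<Rightarrow> 'r::comm_ring_1" and \<Pi> :: "'r \<Rightarrow> 's::comm_ring_1"
  assumes LND: "is_LND c D" and hom_c: "is_ring_hom c" and hom_\<Pi>: "is_ring_hom \<Pi>"
    and vanishes: "\<And>l. \<Pi> (lnd_exp c D l f) = 0"
  shows "\<Pi> (D f) = 0"
proof -
  interpret derivation c D
    using derivation_if_is_LND[OF LND hom_c] .
  define L where "L = (LEAST m. (D ^^ m) f = 0)"
  have "(D ^^ L) f = 0"
    unfolding L_def by (rule LeastI_ex) (use LND in \<open>simp add: is_LND_def\<close>)
  define \<sigma> where "\<sigma> = \<Pi> \<circ> c"
  have hom_\<sigma>: "is_ring_hom \<sigma>"
    unfolding \<sigma>_def by (rule is_ring_hom_comp[OF hom_c hom_\<Pi>])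
  define h where "h n = \<sigma> (1 / fact n) * \<Pi> ((D ^^ n) f)" for n
  have sums_vanish: "(\<Sum>n<L. \<sigma> l ^ n * h n) = 0" for l
  proof -
    have "\<sigma> (l ^ n / fact n) = \<sigma> l ^ n * \<sigma> (1 / fact n)" for n
      using ring_hom_mult[OF hom_\<sigma>, of "l ^ n" "1 / fact n"] ring_hom_power[OF hom_\<sigma>, of l n]
      by simp
    then have "\<Pi> (lnd_exp c D l f) = (\<Sum>n<L. \<sigma> l ^ n * h n)"
      by (simp add: lnd_exp_eq_exp_trunc exp_trunc_def L_def[symmetric] ring_hom_sum[OF hom_\<Pi>]
          ring_hom_mult[OF hom_\<Pi>] h_def \<sigma>_def mult.assoc)
    then show ?thesis
      using vanishes by simp
  qed
  show ?thesis
  proof (cases "1 < L")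
    case True
    then have "h 1 = 0"
      by (rule sum_powers_eq_0_imp_eq_0[OF hom_\<sigma> sums_vanish])
    then show ?thesis
      by (simp add: h_def ring_hom_one[OF hom_\<sigma>])
  next
    case False
    then have "(D ^^ 1) f = 0"
      by (intro iterate_eq_0_mono[OF \<open>(D ^^ L) f = 0\<close>]) simp
    then show ?thesis
      by (simp add: ring_hom_zero[OF hom_\<Pi>])
  qed
qed

lemma LND_descends:
  fixes c :: "'k::field_char_0 \<Rightarrow> 'r::comm_ring_1" and \<Pi> :: "'r \<Rightarrow> 's::comm_ring_1"
  assumes LND: "is_LND c D" and hom_c: "is_ring_hom c" and hom_\<Pi>: "is_ring_hom \<Pi>"
    and surj: "surj \<Pi>" and stable: "\<And>f. \<Pi> f = 0 \<Longrightarrow> \<Pi> (D f) = 0"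
  obtains D' where "is_LND (\<Pi> \<circ> c) D'" and "\<And>f. D' (\<Pi> f) = \<Pi> (D f)"
proof -
  interpret derivation c D
    using derivation_if_is_LND[OF LND hom_c] .
  define D' where "D' g = \<Pi> (D (inv \<Pi> g))" for g
  have D': "D' (\<Pi> f) = \<Pi> (D f)" for f
  proof -
    have "\<Pi> (inv \<Pi> (\<Pi> f) - f) = 0"
      by (simp add: ring_hom_diff[OF hom_\<Pi>] surj_f_inv_f[OF surj])
    then have "\<Pi> (D (inv \<Pi> (\<Pi> f) - f)) = 0"
      by (rule stable)
    then show ?thesis
      by (simp add: D'_def diff ring_hom_diff[OF hom_\<Pi>])
  qed
  have "is_derivation (\<Pi> \<circ> c) D'"
    unfolding is_derivation_def
  proof (intro conjI allI)
    fix x y a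
    obtain x' y' where "x = \<Pi> x'" "y = \<Pi> y'"
      using surj by (metis surjD)
    then show "D' (x + y) = D' x + D' y" "D' (x * y) = x * D' y + y * D' x"
      "D' ((\<Pi> \<circ> c) a * x) = (\<Pi> \<circ> c) a * D' x"
      using D'[of "x' + y'"] D'[of "x' * y'"] D'[of "c a * x'"]
      by (simp_all add: D' add leibniz scalar ring_hom_add[OF hom_\<Pi>] ring_hom_mult[OF hom_\<Pi>])
  qed
  moreover have "\<exists>n. (D' ^^ n) g = 0" for g
  proof -
    obtain f where "g = \<Pi> f"
      using surj by (metis surjD)
    moreover have "(D' ^^ n) (\<Pi> f) = \<Pi> ((D ^^ n) f)" for n
      by (induction n) (simp_all add: D')
    moreover obtain n where "(D ^^ n) f = 0"
      using LND by (auto simp: is_LND_def)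
    ultimately have "(D' ^^ n) g = 0"
      by (simp add: ring_hom_zero[OF hom_\<Pi>])
    then show ?thesis ..
  qed
  ultimately have "is_LND (\<Pi> \<circ> c) D'"
    by (simp add: is_LND_def)
  then show ?thesis
    using that D' by blast
qed

lemma derivation_const_degree_bounded:
  assumes fg: "finitely_generated_alg c" and der: "derivation (poly_K c) D"
  obtains M where "\<And>b. degree (D [:b:]) \<le> M"
proof -
  interpret D: derivation "poly_K c" D
    by (rule der)
  obtain G where "finite G" and G: "alg_gen c G = UNIV"
    using fg by (auto simp: finitely_generated_alg_def)
  define M where "M = Max ((\<lambda>g. degree (D [:g:])) ` G)"
  have "degree (D [:b:]) \<le> M" if "b \<in> alg_gen c G" for b
    using that
  proof induction
    case (scalar a)
    then show ?case
      using D.const[of a] by (simp add: poly_K_def)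
  next
    case (gen g)
    then show ?case
      using \<open>finite G\<close> by (auto simp: M_def)
  next
    case (add x y)
    then show ?case
      using D.add[of "[:x:]" "[:y:]"] degree_add_le[of "D [:x:]" M "D [:y:]"] by simp
  next
    case (mult x y)
    have "D [:x * y:] = smult x (D [:y:]) + smult y (D [:x:])"
      using D.leibniz[of "[:x:]" "[:y:]"] by (simp add: mult.commute)
    then show ?case
      using mult.IH degree_smult_le[of x "D [:y:]"] degree_smult_le[of y "D [:x:]"]
      by (auto intro: degree_add_le)
  qed
  then show ?thesis
    using that G by blast
qed

lemma degree_map_poly_eq_0_on_kernel:
  fixes emb :: "'k::field_char_0 \<Rightarrow> 'a::comm_ring_1" and \<pi> :: "'a \<Rightarrow> 'v::comm_ring_1"
  assumes hom_emb: "is_ring_hom emb" and fg: "finitely_generated_alg emb"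
    and hom_\<pi>: "is_ring_hom \<pi>" and surj_\<pi>: "surj \<pi>"
    and reduced: "\<And>(x::'v) n. x ^ n = 0 \<Longrightarrow> x = 0" and rigid: "rigid (\<pi> \<circ> emb)"
    and invariant: "\<And>D s f. is_LND (poly_K emb) D \<Longrightarrow> map_poly \<pi> f = 0
                      \<Longrightarrow> map_poly \<pi> (lnd_exp (poly_K emb) D s f) = 0"
    and LND: "is_LND (poly_K emb) D" and slice: "D s = 1" and kernel: "D x = 0"
  shows "degree (map_poly \<pi> x) = 0"
proof -
  have hom_map_poly: "is_ring_hom (map_poly \<pi>)"
    by (rule is_ring_hom_map_poly[OF hom_\<pi>])
  have hom_poly_K: "is_ring_hom (poly_K emb)"
    using hom_emb by (simp add: is_ring_hom_poly_K_iff)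
  have der: "derivation (poly_K emb) D"
    using derivation_if_is_LND[OF LND hom_poly_K] .
  obtain M where M: "\<And>b. degree (D [:b:]) \<le> M"
    using derivation_const_degree_bounded[OF fg der] by blast
  have "map_poly \<pi> (D f) = 0" if "map_poly \<pi> f = 0" for f
    using LND_image_eq_0_if_exp_orbit_vanishes[OF LND hom_poly_K hom_map_poly]
      invariant[OF LND that] by blast
  then obtain D' where LND': "is_LND (poly_K (\<pi> \<circ> emb)) D'"
    and D': "\<And>f. D' (map_poly \<pi> f) = map_poly \<pi> (D f)"
    using LND_descends[OF LND hom_poly_K hom_map_poly
        surj_map_poly[OF surj_\<pi> ring_hom_zero[OF hom_\<pi>]]]
    by (metis map_poly_comp_poly_K[OF hom_\<pi>])
  have "degree (D' [:r:]) \<le> M" for r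
  proof -
    obtain b where "r = \<pi> b"
      using surj_\<pi> by (metis surjD)
    then have "D' [:r:] = map_poly \<pi> (D [:b:])"
      using D'[of "[:b:]"] by (simp add: map_poly_pCons ring_hom_zero[OF hom_\<pi>])
    then show ?thesis
      using map_poly_degree_leq[of \<pi> "D [:b:]"] M[of b] by simp
  qed
  then have "D' [:r:] = 0" for r
    using LND_poly_kills_coeffs[OF LND' is_ring_hom_comp[OF hom_emb hom_\<pi>] rigid] reduced by blast
  moreover have "derivation (poly_K (\<pi> \<circ> emb)) D'"
    using derivation_if_is_LND[OF LND'] is_ring_hom_comp[OF hom_emb hom_\<pi>]
    by (simp add: is_ring_hom_poly_K_iff)
  moreover have "D' (map_poly \<pi> s) = 1" "D' (map_poly \<pi> x) = 0"
    using D' slice kernel ring_hom_one[OF hom_map_poly] ring_hom_zero[OF hom_map_poly] by simp_all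
  ultimately show ?thesis
    using derivation_poly_kernel_degree_0 reduced by blast
qed

lemma degree_eq_0_on_HD_star:
  fixes \<Phi> :: "'r::comm_ring_1 \<Rightarrow> 's::comm_ring_1 poly"
  assumes hom: "is_ring_hom \<Phi>" and scalars: "\<And>a. degree (\<Phi> (c a)) = 0"
    and kernels: "\<And>D s x. is_LND c D \<Longrightarrow> D s = 1 \<Longrightarrow> D x = 0 \<Longrightarrow> degree (\<Phi> x) = 0"
    and "x \<in> HD_star c"
  shows "degree (\<Phi> x) = 0"
  using assms(4) unfolding HD_star_def
proof induction
  case (add x y)
  then show ?case
    using degree_add_le[of "\<Phi> x" 0 "\<Phi> y"] by (simp add: ring_hom_add[OF hom])
next
  case (mult x y)
  then show ?case
    using degree_mult_le[of "\<Phi> x" "\<Phi> y"] by (simp add: ring_hom_mult[OF hom])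
qed (use scalars kernels in blast)+

theorem corollary5:
  fixes emb :: "'k::field_char_0 \<Rightarrow> 'a::idom"
    and \<pi> :: "'a \<Rightarrow> 'v::comm_ring_1"
  assumes K_alg_closed: "alg_closed_field TYPE('k)"
    and Y_K_alg: "K_structure emb"
    and Y_fg: "finitely_generated_alg emb"
    and \<pi>_add: "\<And>x y. \<pi> (x + y) = \<pi> x + \<pi> y"
    and \<pi>_mult: "\<And>x y. \<pi> (x * y) = \<pi> x * \<pi> y"
    and \<pi>_one: "\<pi> 1 = 1"
    and \<pi>_surj: "surj \<pi>"
    and V_reduced: "\<And>(x::'v) (n::nat). x ^ n = 0 \<Longrightarrow> x = 0"
    and V_nonempty: "(1::'v) \<noteq> 0"
    and V_rigid: "rigid (\<pi> \<circ> emb)"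
    and V_invariant: "\<And>D s f. is_LND (poly_K emb) D \<Longrightarrow> map_poly \<pi> f = 0
                        \<Longrightarrow> map_poly \<pi> (lnd_exp (poly_K emb) D s f) = 0"
  shows "HD_star (poly_K emb) \<noteq> UNIV"
proof -
  have hom_emb: "is_ring_hom emb"
    using Y_K_alg by (simp add: K_structure_iff_is_ring_hom)
  have hom_\<pi>: "is_ring_hom \<pi>"
    using \<pi>_add \<pi>_mult \<pi>_one by (simp add: is_ring_hom_def)
  have "degree (map_poly \<pi> x) = 0" if "x \<in> HD_star (poly_K emb)" for x
  proof (rule degree_eq_0_on_HD_star[OF is_ring_hom_map_poly[OF hom_\<pi>] _ _ that])
    show "degree (map_poly \<pi> (poly_K emb a)) = 0" for a
      using map_poly_degree_leq[of \<pi> "poly_K emb a"] by (simp add: poly_K_def)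
    show "degree (map_poly \<pi> x) = 0" if "is_LND (poly_K emb) D" "D s = 1" "D x = 0" for D s x
      using degree_map_poly_eq_0_on_kernel[OF hom_emb Y_fg hom_\<pi> \<pi>_surj _ V_rigid _ that]
        V_reduced V_invariant by blast
  qed
  moreover have "degree (map_poly \<pi> [:0, 1:]) = 1"
    using V_nonempty by (simp add: map_poly_pCons \<pi>_one ring_hom_zero[OF hom_\<pi>])
  ultimately show ?thesis
    by force
qed

end
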